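(* Let $S$ be an expanding automaton semigroup with a unique maximal subgroup $G$. Then $G$ is isomorphic to a self-similar group.
   Context: An expanding automaton is a quadruple $(Q,\Sigma,t,o)$ with $Q$ a finite set of states, $\Sigma$ a finite alphabet, $t:Q\times\Sigma\to Q$ and $o:Q\times\Sigma\to\Sigma^+$. Each state $q$ induces $q:\Sigma^*\to\Sigma^*$ by $q(\emptyset)=\emptyset$, $q(\sigma w)=o(q,\sigma)\,q'(w)$ with $q'=t(q,\sigma)$; an expanding automaton semigroup is the semigroup of maps generated under composition by the states. A subgroup of $S$ is a subsemigroup which is a group. A self-similar group is the group generated by the states of an invertible synchronous automaton (output in $\Sigma$, $o(q,\cdot)$ a permutation of $\Sigma$ for each $q$) with possibly infinitely many states. *)

theory Defs
  imports "HOL-Algebra.Bij" "HOL-Algebra.Generated_Groups"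
begin

(* Expanding automaton (Q, Sigma, t, o): Q = UNIV of a finite type 'q,
   Sigma = UNIV of a finite type 'a, t :: 'q => 'a => 'q, o :: 'q => 'a => 'a list
   (with o q a nonempty). *)
fun exp_act :: "('q \<Rightarrow> 'a \<Rightarrow> 'q) \<Rightarrow> ('q \<Rightarrow> 'a \<Rightarrow> 'a list) \<Rightarrow> 'q \<Rightarrow> 'a list \<Rightarrow> 'a list" where
  "exp_act t out q [] = []"
| "exp_act t out q (s # w) = out q s @ exp_act t out (t q s) w"

definition expanding_automaton :: "('q::finite \<Rightarrow> 'a::finite \<Rightarrow> 'q) \<Rightarrow> ('q \<Rightarrow> 'a \<Rightarrow> 'a list) \<Rightarrow> bool" where
  "expanding_automaton t out \<longleftrightarrow> (\<forall>q s. out q s \<noteq> [])"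

inductive_set sgen :: "('b \<Rightarrow> 'b) set \<Rightarrow> ('b \<Rightarrow> 'b) set" for A where
  base: "f \<in> A \<Longrightarrow> f \<in> sgen A"
| comp: "f \<in> sgen A \<Longrightarrow> g \<in> sgen A \<Longrightarrow> f \<circ> g \<in> sgen A"

definition exp_semigroup :: "('q \<Rightarrow> 'a \<Rightarrow> 'q) \<Rightarrow> ('q \<Rightarrow> 'a \<Rightarrow> 'a list) \<Rightarrow> ('a list \<Rightarrow> 'a list) set" where
  "exp_semigroup t out = sgen (range (exp_act t out))"

(* a subgroup of a semigroup of maps: a subsemigroup that is a group (its identity
   need not be the identity map) *)
definition sg_subgroup :: "('b \<Rightarrow> 'b) set \<Rightarrow> ('b \<Rightarrow> 'b) set \<Rightarrow> bool" where
  "sg_subgroup S H \<longleftrightarrow> H \<subseteq> S \<and> (\<exists>e. group \<lparr>carrier = H, mult = (\<circ>), one = e\<rparr>)"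

definition sg_maximal_subgroup :: "('b \<Rightarrow> 'b) set \<Rightarrow> ('b \<Rightarrow> 'b) set \<Rightarrow> bool" where
  "sg_maximal_subgroup S H \<longleftrightarrow> sg_subgroup S H \<and> (\<forall>K. sg_subgroup S K \<and> H \<subseteq> K \<longrightarrow> K = H)"

definition group_of :: "('b \<Rightarrow> 'b) set \<Rightarrow> ('b \<Rightarrow> 'b) monoid" where
  "group_of H = \<lparr>carrier = H, mult = (\<circ>),
     one = (THE e. group \<lparr>carrier = H, mult = (\<circ>), one = e\<rparr>)\<rparr>"

(* Invertible synchronous automaton over the finite alphabet X (a finite set of nats),
   states nat (possibly infinitely many), t :: nat => nat => nat, o :: nat => nat => nat
   with o q a permutation of X. *)
fun sync_act :: "(nat \<Rightarrow> nat \<Rightarrow> nat) \<Rightarrow> (nat \<Rightarrow> nat \<Rightarrow> nat) \<Rightarrow> nat \<Rightarrow> nat list \<Rightarrow> nat list" where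
  "sync_act t out q [] = []"
| "sync_act t out q (x # w) = out q x # sync_act t out (t q x) w"

(* the map induced by state q on X^*, extended by the identity outside X^* so that it is a
   permutation of UNIV *)
definition sync_state_map :: "nat set \<Rightarrow> (nat \<Rightarrow> nat \<Rightarrow> nat) \<Rightarrow> (nat \<Rightarrow> nat \<Rightarrow> nat) \<Rightarrow> nat \<Rightarrow> nat list \<Rightarrow> nat list" where
  "sync_state_map X t out q w = (if w \<in> lists X then sync_act t out q w else w)"

definition invertible_sync_automaton :: "nat set \<Rightarrow> (nat \<Rightarrow> nat \<Rightarrow> nat) \<Rightarrow> (nat \<Rightarrow> nat \<Rightarrow> nat) \<Rightarrow> bool" where
  "invertible_sync_automaton X t out \<longleftrightarrow> finite X \<and>
     (\<forall>q. bij_betw (out q) X X)"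

definition self_similar_group :: "nat set \<Rightarrow> (nat \<Rightarrow> nat \<Rightarrow> nat) \<Rightarrow> (nat \<Rightarrow> nat \<Rightarrow> nat) \<Rightarrow> (nat list \<Rightarrow> nat list) monoid" where
  "self_similar_group X t out =
     (BijGroup UNIV)\<lparr>carrier := generate (BijGroup UNIV) (range (sync_state_map X t out))\<rparr>"

end

theory Submission
  imports Defs "HOL-Library.Countable_Set"
begin

(* Proof strategy.
   1. Every element f of an expanding automaton semigroup S satisfies f (u @ v) = f u @ f|u (v) for a
      section f|u that again lies in S, and f never shortens words (locale word_semigroup).
   2. For an idempotent f of any semigroup of maps, the units of the local monoid f S f form a maximal
      subgroup units_at S f.  So if S has a unique maximal subgroup G, then S has a unique
      idempotent e, and G = units_at S e.
   3. A countable group G acting on words over a finite alphabet L letter by letter, with sections at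
      letters in G (locale self_similar_word_group), is realised by the invertible synchronous
      automaton whose states index the elements of G and whose letters code L; recoding words is
      the isomorphism onto the generated self-similar group.
   4. In a word semigroup with a unique idempotent e, the idempotent cannot shorten words, so it fixes
      exactly the words over the set L of letters it fixes; the elements of units_at S e then act
      self-similarly on L* in the sense of 3.
   The theorem follows by combining 1, 2, 4 and 3, using that S, being generated by finitely many
   maps, is countable. *)

section \<open>Semigroups of word maps with sections\<close>

definition secw :: "('b list \<Rightarrow> 'b list) \<Rightarrow> 'b list \<Rightarrow> 'b list \<Rightarrow> 'b list" where
  "secw f u = (\<lambda>v. drop (length (f u)) (f (u @ v)))"

locale word_semigroup =
  fixes S :: "('b list \<Rightarrow> 'b list) set"
  assumes comp_closed: "f \<in> S \<Longrightarrow> g \<in> S \<Longrightarrow> f \<circ> g \<in> S"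
    and section_decomp: "f \<in> S \<Longrightarrow> f (u @ v) = f u @ secw f u v"
    and section_closed: "f \<in> S \<Longrightarrow> secw f u \<in> S"
    and length_mono: "f \<in> S \<Longrightarrow> length w \<le> length (f w)"
    and empty_word: "f \<in> S \<Longrightarrow> f [] = []"

lemma exp_act_append:
  "exp_act t out q (u @ v) = exp_act t out q u @ exp_act t out (fold (\<lambda>s q. t q s) u q) v"
  by (induction u arbitrary: q) auto

lemma secw_exp_act: "secw (exp_act t out q) u = exp_act t out (fold (\<lambda>s q. t q s) u q)"
  by (rule ext) (simp add: secw_def exp_act_append)

lemma secw_comp:
  assumes "\<And>u v. f (u @ v) = f u @ secw f u v" and "\<And>u v. g (u @ v) = g u @ secw g u v"
  shows "(f \<circ> g) (u @ v) = (f \<circ> g) u @ secw (f \<circ> g) u v"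
    and "secw (f \<circ> g) u = secw f (g u) \<circ> secw g u"
proof -
  have fg: "(f \<circ> g) (u @ v) = f (g u) @ secw f (g u) (secw g u v)" for v
    using assms by simp
  then show "(f \<circ> g) (u @ v) = (f \<circ> g) u @ secw (f \<circ> g) u v"
    by (simp add: secw_def)
  show "secw (f \<circ> g) u = secw f (g u) \<circ> secw g u"
  proof
    fix v
    have "secw (f \<circ> g) u v = drop (length ((f \<circ> g) u)) ((f \<circ> g) (u @ v))"
      by (simp only: secw_def)
    also have "\<dots> = secw f (g u) (secw g u v)" using fg by simp
    finally show "secw (f \<circ> g) u v = (secw f (g u) \<circ> secw g u) v" by simp
  qed
qed

lemma sgen_exp_act_sections:
  assumes "f \<in> sgen (range (exp_act t out))"
  shows "f (u @ v) = f u @ secw f u v \<and> secw f u \<in> sgen (range (exp_act t out))"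
  using assms
proof (induction arbitrary: u v rule: sgen.induct)
  case (base f)
  then show ?case by (auto simp: secw_exp_act exp_act_append intro: sgen.base)
next
  case (comp f g)
  then show ?case by (simp add: secw_comp sgen.comp del: comp_apply)
qed

lemma exp_act_length:
  assumes "expanding_automaton t out"
  shows "length w \<le> length (exp_act t out q w)"
proof (induction w arbitrary: q)
  case (Cons s w)
  have "out q s \<noteq> []" using assms by (simp add: expanding_automaton_def)
  with Cons[of "t q s"] show ?case by (cases "out q s") auto
qed simp

lemma exp_semigroup_word_semigroup:
  assumes "expanding_automaton t out"
  shows "word_semigroup (exp_semigroup t out)"
proof
  fix f g w u v assume f: "f \<in> exp_semigroup t out"
  then show "f (u @ v) = f u @ secw f u v" "secw f u \<in> exp_semigroup t out"
    using sgen_exp_act_sections unfolding exp_semigroup_def by blast+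
  show "f [] = []" using f unfolding exp_semigroup_def by (induction rule: sgen.induct) auto
  show "length w \<le> length (f w)" using f unfolding exp_semigroup_def
    by (induction arbitrary: w rule: sgen.induct) (auto intro: le_trans exp_act_length[OF assms])
  assume "g \<in> exp_semigroup t out"
  then show "f \<circ> g \<in> exp_semigroup t out" using f unfolding exp_semigroup_def by (rule sgen.comp[rotated])
qed

section \<open>Maximal subgroups of a semigroup of maps\<close>

abbreviation comp_monoid :: "('b \<Rightarrow> 'b) set \<Rightarrow> ('b \<Rightarrow> 'b) \<Rightarrow> ('b \<Rightarrow> 'b) monoid" where
  "comp_monoid K e \<equiv> \<lparr>carrier = K, mult = (\<circ>), one = e\<rparr>"

(* The units of the local monoid f S f; for an idempotent f this is the maximal subgroup at f. *)
definition units_at :: "('b \<Rightarrow> 'b) set \<Rightarrow> ('b \<Rightarrow> 'b) \<Rightarrow> ('b \<Rightarrow> 'b) set" where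
  "units_at S f = {x \<in> S. x \<circ> f = x \<and> f \<circ> x = x \<and>
     (\<exists>y\<in>S. y \<circ> f = y \<and> f \<circ> y = y \<and> x \<circ> y = f \<and> y \<circ> x = f)}"

lemma units_at_comp:
  assumes S: "\<And>f g. f \<in> S \<Longrightarrow> g \<in> S \<Longrightarrow> f \<circ> g \<in> S"
    and x: "x \<in> units_at S f" and y: "y \<in> units_at S f"
  shows "x \<circ> y \<in> units_at S f"
proof -
  from x obtain x' where x': "x \<in> S" "x \<circ> f = x" "f \<circ> x = x" "x' \<in> S" "x' \<circ> f = x'"
      "f \<circ> x' = x'" "x \<circ> x' = f" "x' \<circ> x = f"
    by (auto simp: units_at_def)
  from y obtain y' where y': "y \<in> S" "y \<circ> f = y" "f \<circ> y = y" "y' \<in> S" "y' \<circ> f = y'"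
      "f \<circ> y' = y'" "y \<circ> y' = f" "y' \<circ> y = f"
    by (auto simp: units_at_def)
  have "(x \<circ> y) \<circ> (y' \<circ> x') = f" "(y' \<circ> x') \<circ> (x \<circ> y) = f"
    by (metis comp_assoc x'(2,7) y'(7), metis comp_assoc x'(8) y'(5,8))
  moreover have "(x \<circ> y) \<circ> f = x \<circ> y" "f \<circ> (x \<circ> y) = x \<circ> y"
      "(y' \<circ> x') \<circ> f = y' \<circ> x'" "f \<circ> (y' \<circ> x') = y' \<circ> x'"
    by (metis comp_assoc y'(2), metis comp_assoc x'(3), metis comp_assoc x'(5), metis comp_assoc y'(6))
  moreover have "x \<circ> y \<in> S" "y' \<circ> x' \<in> S" using x' y' S by auto
  ultimately show ?thesis unfolding units_at_def by blast
qed

lemma units_at_group: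
  assumes S: "\<And>f g. f \<in> S \<Longrightarrow> g \<in> S \<Longrightarrow> f \<circ> g \<in> S"
    and f: "f \<in> S" "f \<circ> f = f"
  shows "group (comp_monoid (units_at S f) f)"
proof (rule groupI)
  fix x y assume "x \<in> carrier (comp_monoid (units_at S f) f)" "y \<in> carrier (comp_monoid (units_at S f) f)"
  then show "x \<otimes>\<^bsub>comp_monoid (units_at S f) f\<^esub> y \<in> carrier (comp_monoid (units_at S f) f)"
    using units_at_comp[OF S] by simp
next
  fix x assume "x \<in> carrier (comp_monoid (units_at S f) f)"
  then obtain x' where "x' \<in> S" "x' \<circ> f = x'" "f \<circ> x' = x'" "x \<circ> x' = f" "x' \<circ> x = f"
      "x \<in> S" "x \<circ> f = x" "f \<circ> x = x"
    by (auto simp: units_at_def)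
  then have "x' \<in> units_at S f" "x' \<circ> x = f" by (auto simp: units_at_def)
  then show "\<exists>y\<in>carrier (comp_monoid (units_at S f) f).
      y \<otimes>\<^bsub>comp_monoid (units_at S f) f\<^esub> x = \<one>\<^bsub>comp_monoid (units_at S f) f\<^esub>"
    by auto
qed (use f in \<open>auto simp: units_at_def comp_assoc\<close>)

lemma subgroup_subset_units_at:
  assumes "K \<subseteq> S" and "group (comp_monoid K e)"
  shows "K \<subseteq> units_at S e"
proof
  interpret K: group "comp_monoid K e" by fact
  fix k assume k: "k \<in> K"
  let ?k' = "inv\<^bsub>comp_monoid K e\<^esub> k"
  have "?k' \<in> K" using K.inv_closed[of k] k by simp
  moreover note K.l_inv[of k] K.r_inv[of k] K.r_one[of k] K.l_one[of k] K.r_one[of ?k'] K.l_one[of ?k']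
  ultimately show "k \<in> units_at S e" using k assms(1) unfolding units_at_def by auto
qed

lemma idempotent_in_units_at: "f \<in> S \<Longrightarrow> f \<circ> f = f \<Longrightarrow> f \<in> units_at S f"
  by (auto simp: units_at_def)

lemma idempotent_unit_is_identity:
  assumes "f \<in> units_at S e" and "f \<circ> f = f"
  shows "f = e"
proof -
  obtain y where "y \<circ> f = e" "e \<circ> f = f" using assms(1) by (auto simp: units_at_def)
  then have "e = y \<circ> (f \<circ> f)" by (simp add: assms(2))
  also have "\<dots> = e \<circ> f" by (simp add: \<open>y \<circ> f = e\<close> flip: comp_assoc)
  finally show ?thesis using \<open>e \<circ> f = f\<close> by simp
qed

(* The group of units at an idempotent f is a maximal subgroup: any subgroup containing it has
   identity f and so lies inside it. *)
lemma units_at_maximal: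
  assumes S: "\<And>f g. f \<in> S \<Longrightarrow> g \<in> S \<Longrightarrow> f \<circ> g \<in> S"
    and f: "f \<in> S" "f \<circ> f = f"
  shows "sg_maximal_subgroup S (units_at S f)"
  unfolding sg_maximal_subgroup_def
proof (intro conjI allI impI)
  show "sg_subgroup S (units_at S f)"
    unfolding sg_subgroup_def using units_at_group[OF S f] by (auto simp: units_at_def)
  fix K assume K: "sg_subgroup S K \<and> units_at S f \<subseteq> K"
  then obtain e where KS: "K \<subseteq> S" and Kg: "group (comp_monoid K e)"
    unfolding sg_subgroup_def by blast
  have "f \<in> K" using K idempotent_in_units_at[OF f] by auto
  then have "f = e" using group.l_cancel_one[OF Kg, of f f] f(2) by simp
  then show "K = units_at S f" using subgroup_subset_units_at[OF KS Kg] K by auto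
qed

lemma unique_maximal_subgroup:
  assumes S: "\<And>f g. f \<in> S \<Longrightarrow> g \<in> S \<Longrightarrow> f \<circ> g \<in> S"
    and G: "sg_maximal_subgroup S G"
    and unique: "\<forall>K. sg_maximal_subgroup S K \<longrightarrow> K = G"
  obtains e where "e \<in> S" "e \<circ> e = e" "G = units_at S e"
    "\<And>f. f \<in> S \<Longrightarrow> f \<circ> f = f \<Longrightarrow> f = e"
proof -
  obtain e where GS: "G \<subseteq> S" and Gg: "group (comp_monoid G e)"
    using G unfolding sg_maximal_subgroup_def sg_subgroup_def by blast
  interpret G: group "comp_monoid G e" by (fact Gg)
  have eG: "e \<in> G" and ee: "e \<circ> e = e" using G.one_closed G.l_one[of e] by auto
  have "sg_maximal_subgroup S (units_at S e)" using units_at_maximal[OF S] eG GS ee by auto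
  then have Ge: "G = units_at S e" using unique by auto
  have "f = e" if f: "f \<in> S" "f \<circ> f = f" for f
  proof -
    have "units_at S f = G" using units_at_maximal[OF S f] unique by blast
    then have "f \<in> units_at S e" using idempotent_in_units_at[OF f] Ge by simp
    then show "f = e" using idempotent_unit_is_identity f(2) by blast
  qed
  moreover have "e \<in> S" using eG GS by blast
  ultimately show thesis using that ee Ge by blast
qed

section \<open>Self-similar actions and their realisation by synchronous automata\<close>

locale self_similar_word_group =
  fixes G :: "('a list \<Rightarrow> 'a list) set" and e :: "'a list \<Rightarrow> 'a list" and L :: "'a set"
  assumes group: "group (comp_monoid G e)"
    and into_lists: "g \<in> G \<Longrightarrow> g w \<in> lists L"
    and e_fixes: "w \<in> lists L \<Longrightarrow> e w = w"
    and empty_word: "g \<in> G \<Longrightarrow> g [] = []"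
    and letter: "g \<in> G \<Longrightarrow> s \<in> L \<Longrightarrow> \<exists>s'\<in>L. g [s] = [s']"
    and cons_decomp: "g \<in> G \<Longrightarrow> s \<in> L \<Longrightarrow> g (s # v) = g [s] @ secw g [s] v"
    and section_in: "g \<in> G \<Longrightarrow> s \<in> L \<Longrightarrow> secw g [s] \<in> G"
begin

lemma one_in: "e \<in> G"
  and comp_in: "g \<in> G \<Longrightarrow> h \<in> G \<Longrightarrow> g \<circ> h \<in> G"
  and comp_one: "g \<in> G \<Longrightarrow> g \<circ> e = g"
  and inverse: "g \<in> G \<Longrightarrow> \<exists>g'\<in>G. g' \<circ> g = e \<and> g \<circ> g' = e"
proof -
  interpret G: group "comp_monoid G e" by (fact group)
  show "e \<in> G" "g \<in> G \<Longrightarrow> h \<in> G \<Longrightarrow> g \<circ> h \<in> G" "g \<in> G \<Longrightarrow> g \<circ> e = g"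
    using G.one_closed G.m_closed[of g h] G.r_one[of g] by auto
  assume "g \<in> G"
  then show "\<exists>g'\<in>G. g' \<circ> g = e \<and> g \<circ> g' = e"
    using G.l_inv[of g] G.r_inv[of g] G.inv_closed[of g] by auto
qed

end

lemma BijGroup_mult: "a \<in> Bij UNIV \<Longrightarrow> b \<in> Bij UNIV \<Longrightarrow> a \<otimes>\<^bsub>BijGroup UNIV\<^esub> b = a \<circ> b"
  by (simp add: BijGroup_def compose_def restrict_UNIV o_def)

lemma BijGroup_one: "\<one>\<^bsub>BijGroup UNIV\<^esub> = id"
  by (simp add: BijGroup_def restrict_UNIV id_def)

(* For a countable group over a finite alphabet: the states of the automaton are the naturals
   (indexing G), its letters the codes of L; recode transports a map on L* to coded words. *)
locale countable_self_similar_word_group = self_similar_word_group +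
  assumes finite_letters: "finite L" and countable_group: "countable G"
begin

definition code :: "'a \<Rightarrow> nat" where "code = to_nat_on L"
definition decode :: "nat \<Rightarrow> 'a" where "decode = from_nat_into L"
definition alphabet :: "nat set" where "alphabet = code ` L"
definition state :: "nat \<Rightarrow> 'a list \<Rightarrow> 'a list" where "state = from_nat_into G"
definition index :: "('a list \<Rightarrow> 'a list) \<Rightarrow> nat" where "index = to_nat_on G"

definition sync_out :: "nat \<Rightarrow> nat \<Rightarrow> nat" where
  "sync_out n x = (if x \<in> alphabet then code (hd (state n [decode x])) else x)"
definition sync_trans :: "nat \<Rightarrow> nat \<Rightarrow> nat" where
  "sync_trans n x = index (secw (state n) [decode x])"

definition recode :: "('a list \<Rightarrow> 'a list) \<Rightarrow> nat list \<Rightarrow> nat list" where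
  "recode g w = (if w \<in> lists alphabet then map code (g (map decode w)) else w)"

lemma decode_code [simp]: "a \<in> L \<Longrightarrow> decode (code a) = a"
  using countable_finite[OF finite_letters] by (simp add: code_def decode_def)

lemma code_inj: "inj_on code L"
  using countable_finite[OF finite_letters] by (simp add: code_def inj_on_to_nat_on)

lemma state_in: "state n \<in> G"
  unfolding state_def using one_in by (intro from_nat_into) auto

lemma state_index [simp]: "g \<in> G \<Longrightarrow> state (index g) = g"
  using countable_group by (simp add: state_def index_def)

lemma decode_word: "w \<in> lists alphabet \<Longrightarrow> map decode w \<in> lists L \<and> map code (map decode w) = w"
  by (induction w) (auto simp: alphabet_def)

lemma code_word: "u \<in> lists L \<Longrightarrow> map code u \<in> lists alphabet \<and> map decode (map code u) = u"
  by (induction u) (auto simp: alphabet_def)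

lemma sync_act_state:
  "w \<in> lists alphabet \<Longrightarrow> sync_act sync_trans sync_out n w = recode (state n) w"
proof (induction w arbitrary: n)
  case Nil
  then show ?case using empty_word[OF state_in] by (simp add: recode_def)
next
  case (Cons x w)
  obtain s where s: "s \<in> L" "x = code s" using Cons.prems by (auto simp: alphabet_def)
  obtain s' where s': "s' \<in> L" "state n [s] = [s']" using letter[OF state_in s(1)] by blast
  have "state n (s # map decode w) = s' # secw (state n) [s] (map decode w)"
    using cons_decomp[OF state_in[of n] s(1), of "map decode w"] s'(2) by simp
  moreover have "sync_out n x = code s'" using s s' by (simp add: sync_out_def alphabet_def)
  moreover have "state (sync_trans n x) = secw (state n) [s]"
    using s section_in[OF state_in s(1)] by (simp add: sync_trans_def)
  ultimately show ?case using Cons s by (simp add: recode_def)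
qed

lemma range_state_map: "range (sync_state_map alphabet sync_trans sync_out) = recode ` G"
proof -
  have "sync_state_map alphabet sync_trans sync_out n = recode (state n)" for n
    by (rule ext) (simp add: sync_state_map_def sync_act_state recode_def)
  then have "range (sync_state_map alphabet sync_trans sync_out) = recode ` range state"
    by auto
  also have "range state = G"
  proof
    show "G \<subseteq> range state" using state_index by (metis image_eqI subsetI UNIV_I)
  qed (use state_in in auto)
  finally show ?thesis .
qed

lemma recode_comp:
  assumes "h \<in> G" shows "recode (g \<circ> h) = recode g \<circ> recode h"
proof
  fix w
  have "map code (h (map decode w)) \<in> lists alphabet \<and>
      map decode (map code (h (map decode w))) = h (map decode w)"
    using code_word into_lists[OF assms] by blast
  then show "recode (g \<circ> h) w = (recode g \<circ> recode h) w"
    by (simp add: recode_def del: map_map)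
qed

lemma recode_one: "recode e = id"
proof
  fix w show "recode e w = id w"
    using decode_word[of w] e_fixes by (simp add: recode_def del: map_map)
qed

lemma recode_bij: "g \<in> G \<Longrightarrow> recode g \<in> Bij UNIV"
proof -
  assume g: "g \<in> G"
  then obtain g' where g': "g' \<in> G" "g' \<circ> g = e" "g \<circ> g' = e" using inverse by blast
  have "recode g \<circ> recode g' = id" "recode g' \<circ> recode g = id"
    using recode_comp[OF g'(1), of g] recode_comp[OF g, of g'] g'(2,3) recode_one by simp_all
  then have "bij (recode g)" using o_bij by blast
  then show ?thesis by (simp add: Bij_def)
qed

(* G acts faithfully on words over L, since g = g \<circ> e and e maps everything into lists L. *)
lemma recode_inj: "inj_on recode G"
proof
  fix g h assume g: "g \<in> G" and h: "h \<in> G" and eq: "recode g = recode h"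
  show "g = h"
  proof
    fix w
    have eL: "e w \<in> lists L" using into_lists[OF one_in] .
    have "recode g (map code (e w)) = recode h (map code (e w))" using eq by simp
    then have "map code (g (e w)) = map code (h (e w))"
      using code_word[OF eL] by (simp add: recode_def)
    moreover have "set (g (e w)) \<union> set (h (e w)) \<subseteq> L"
      using into_lists[OF g] into_lists[OF h] by auto
    ultimately have "g (e w) = h (e w)"
      using inj_on_map_eq_map[OF inj_on_subset[OF code_inj]] by blast
    then show "g w = h w" using comp_one[OF g] comp_one[OF h] by (metis comp_apply)
  qed
qed

(* The recoded maps form a subgroup of the symmetric group, so they generate themselves. *)
lemma recode_subgroup: "subgroup (recode ` G) (BijGroup UNIV)"
proof (rule subgroup.intro)
  show "recode ` G \<subseteq> carrier (BijGroup UNIV)" using recode_bij by (auto simp: BijGroup_def)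
next
  fix a b assume "a \<in> recode ` G" "b \<in> recode ` G"
  then obtain g h where "g \<in> G" "h \<in> G" "a = recode g" "b = recode h" by blast
  then have "a \<otimes>\<^bsub>BijGroup UNIV\<^esub> b = recode (g \<circ> h)" "g \<circ> h \<in> G"
    using BijGroup_mult recode_bij recode_comp comp_in by auto
  then show "a \<otimes>\<^bsub>BijGroup UNIV\<^esub> b \<in> recode ` G" by blast
next
  have "id \<in> recode ` G" using one_in by (rule image_eqI[rotated]) (simp add: recode_one)
  then show "\<one>\<^bsub>BijGroup UNIV\<^esub> \<in> recode ` G" by (simp add: BijGroup_one)
next
  interpret Bij: group "BijGroup (UNIV :: nat list set)" by (rule group_BijGroup)
  fix a assume "a \<in> recode ` G"
  then obtain g where g: "g \<in> G" "a = recode g" by blast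
  obtain g' where g': "g' \<in> G" "g' \<circ> g = e" using inverse[OF g(1)] by blast
  have carr: "a \<in> carrier (BijGroup UNIV)" "recode g' \<in> carrier (BijGroup UNIV)"
    using recode_bij g g'(1) by (auto simp: BijGroup_def)
  have "recode g' \<otimes>\<^bsub>BijGroup UNIV\<^esub> a = recode (g' \<circ> g)"
    using BijGroup_mult[OF recode_bij recode_bij, of g' g] recode_comp g g'(1) by simp
  also have "\<dots> = \<one>\<^bsub>BijGroup UNIV\<^esub>" using g'(2) recode_one by (simp add: BijGroup_one)
  finally have "inv\<^bsub>BijGroup UNIV\<^esub> a = recode g'"
    using Bij.inv_equality carr by blast
  then show "inv\<^bsub>BijGroup UNIV\<^esub> a \<in> recode ` G" using g' by simp
qed

lemma self_similar_group_carrier: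
  "carrier (self_similar_group alphabet sync_trans sync_out) = recode ` G"
proof -
  interpret Bij: group "BijGroup (UNIV :: nat list set)" by (rule group_BijGroup)
  have "generate (BijGroup UNIV) (recode ` G) = recode ` G"
    using Bij.generate_subgroup_incl[OF subset_refl recode_subgroup]
      generate.incl[of _ "recode ` G" "BijGroup UNIV"] by blast
  then show ?thesis by (simp add: self_similar_group_def range_state_map)
qed

lemma recode_iso: "recode \<in> iso (group_of G) (self_similar_group alphabet sync_trans sync_out)"
  unfolding iso_def hom_def
proof (intro CollectI conjI)
  show "recode \<in> carrier (group_of G) \<rightarrow> carrier (self_similar_group alphabet sync_trans sync_out)"
    using self_similar_group_carrier by (auto simp: group_of_def)
  show "\<forall>x\<in>carrier (group_of G). \<forall>y\<in>carrier (group_of G).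
      recode (x \<otimes>\<^bsub>group_of G\<^esub> y) = recode x \<otimes>\<^bsub>self_similar_group alphabet sync_trans sync_out\<^esub> recode y"
    by (simp add: group_of_def self_similar_group_def BijGroup_mult recode_bij recode_comp)
  show "bij_betw recode (carrier (group_of G)) (carrier (self_similar_group alphabet sync_trans sync_out))"
    using recode_inj self_similar_group_carrier by (simp add: group_of_def bij_betw_def)
qed

(* Each state permutes the coded letters: letters go to letters injectively, since G is a group. *)
lemma sync_out_bij: "bij_betw (sync_out n) alphabet alphabet"
proof -
  have out_code: "\<exists>s'\<in>L. state n [s] = [s'] \<and> sync_out n (code s) = code s'" if s: "s \<in> L" for s
  proof -
    obtain s' where "s' \<in> L" "state n [s] = [s']" using letter[OF state_in s] by blast
    then show ?thesis using s by (auto simp: sync_out_def alphabet_def)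
  qed
  have img: "sync_out n ` alphabet \<subseteq> alphabet"
    using out_code by (auto simp: alphabet_def)
  have inj: "inj_on (sync_out n) alphabet"
  proof
    fix x y assume "x \<in> alphabet" "y \<in> alphabet" and eq: "sync_out n x = sync_out n y"
    then obtain a b where a: "a \<in> L" "x = code a" and b: "b \<in> L" "y = code b"
      by (auto simp: alphabet_def)
    obtain a' b' where a': "a' \<in> L" "state n [a] = [a']" "sync_out n x = code a'"
      and b': "b' \<in> L" "state n [b] = [b']" "sync_out n y = code b'"
      using out_code a b by blast
    have "a' = b'" using eq a'(1,3) b'(1,3) inj_onD[OF code_inj] by simp
    obtain g' where g': "g' \<circ> state n = e" using inverse[OF state_in] by blast
    have "e [a] = g' (state n [a])" "e [b] = g' (state n [b])" using g' by auto
    then have "e [a] = e [b]" using a'(2) b'(2) \<open>a' = b'\<close> by simp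
    then show "x = y" using a b e_fixes by simp
  qed
  have "finite alphabet" unfolding alphabet_def using finite_letters by simp
  then show ?thesis unfolding bij_betw_def using endo_inj_surj[OF _ img inj] inj by simp
qed

lemma realisation:
  "\<exists>(X::nat set) t' out'. invertible_sync_automaton X t' out' \<and> group_of G \<cong> self_similar_group X t' out'"
proof (intro exI conjI)
  show "invertible_sync_automaton alphabet sync_trans sync_out"
    using sync_out_bij finite_letters by (simp add: invertible_sync_automaton_def alphabet_def)
  show "group_of G \<cong> self_similar_group alphabet sync_trans sync_out" by (rule is_isoI[OF recode_iso])
qed

end

lemma (in self_similar_word_group) realisation_as_self_similar_group:
  assumes "finite L" and "countable G"
  shows "\<exists>(X::nat set) t' out'. invertible_sync_automaton X t' out' \<and> group_of G \<cong> self_similar_group X t' out'"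
proof -
  interpret countable_self_similar_word_group G e L by unfold_locales (fact assms)+
  show ?thesis by (rule realisation)
qed

section \<open>Word semigroups with a unique idempotent\<close>

locale unipotent_word_semigroup = word_semigroup S for S :: "('b list \<Rightarrow> 'b list) set" +
  fixes e :: "'b list \<Rightarrow> 'b list"
  assumes e_in: "e \<in> S" and e_idem: "e \<circ> e = e"
    and idempotent_unique: "f \<in> S \<Longrightarrow> f \<circ> f = f \<Longrightarrow> f = e"
begin

(* The letters fixed by e; e turns out to fix exactly the words over them. *)
definition fixed_letters :: "'b set" where "fixed_letters = {s. e [s] = [s]}"

(* Since e cannot shorten words, a fixed word u = p @ v forces e to fix p and its section to fix v. *)
lemma e_fixes_prefix:
  assumes "e (p @ v) = p @ v"
  shows "e p = p" and "secw e p v = v"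
proof -
  have eq: "e p @ secw e p v = p @ v" using section_decomp[OF e_in, of p v] assms by simp
  have "length p \<le> length (e p)" "length v \<le> length (secw e p v)"
    using length_mono e_in section_closed by blast+
  moreover have "length (e p) + length (secw e p v) = length p + length v"
    using arg_cong[OF eq, of length] by simp
  ultimately have "length (e p) = length p" by linarith
  with eq show "e p = p" "secw e p v = v" by (simp_all add: append_eq_append_conv)
qed

(* The section of e at a fixed word is again idempotent, hence equal to e. *)
lemma section_at_fixed: assumes "e p = p" shows "secw e p = e"
proof (rule idempotent_unique)
  show "secw e p \<in> S" using section_closed[OF e_in] .
  show "secw e p \<circ> secw e p = secw e p"
  proof
    fix v
    have "e (p @ v) = p @ secw e p v" "e (p @ secw e p v) = p @ secw e p (secw e p v)"
      using section_decomp[OF e_in] assms by simp_all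
    moreover have "e (e (p @ v)) = e (p @ v)" using e_idem by (metis comp_apply)
    ultimately show "(secw e p \<circ> secw e p) v = secw e p v" by simp
  qed
qed

lemma e_append_fixed: "e p = p \<Longrightarrow> e (p @ v) = p @ e v"
  using section_decomp[OF e_in, of p v] section_at_fixed by simp

lemma e_fixed_iff: "e w = w \<longleftrightarrow> w \<in> lists fixed_letters"
proof (induction w)
  case Nil
  then show ?case using empty_word[OF e_in] by simp
next
  case (Cons s w)
  have "e (s # w) = s # w \<longleftrightarrow> e [s] = [s] \<and> e w = w"
    using e_fixes_prefix[of "[s]" w] section_at_fixed[of "[s]"] e_append_fixed[of "[s]" w] by auto
  then show ?case using Cons by (simp add: fixed_letters_def)
qed

lemma unit_basic:
  assumes "g \<in> units_at S e"
  shows "g \<in> S" and "g \<circ> e = g" and "e \<circ> g = g"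
    and "\<exists>g'\<in>units_at S e. g' \<circ> g = e \<and> g \<circ> g' = e"
proof -
  show "g \<in> S" "g \<circ> e = g" "e \<circ> g = g" using assms by (auto simp: units_at_def)
  interpret U: group "comp_monoid (units_at S e) e"
    using units_at_group[OF comp_closed e_in e_idem] .
  show "\<exists>g'\<in>units_at S e. g' \<circ> g = e \<and> g \<circ> g' = e"
    using U.l_inv[of g] U.r_inv[of g] U.inv_closed[of g] assms by auto
qed

(* Since e g = g, every value of g is fixed by e. *)
lemma unit_into_lists: "g \<in> units_at S e \<Longrightarrow> g w \<in> lists fixed_letters"
  using e_fixed_iff[of "g w"] unit_basic(3) by (metis comp_apply)

(* Units are invertible and cannot shorten words, so they preserve length on fixed words. *)
lemma unit_length:
  assumes g: "g \<in> units_at S e" and w: "w \<in> lists fixed_letters"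
  shows "length (g w) = length w"
proof -
  obtain g' where g': "g' \<in> units_at S e" "g' \<circ> g = e" using unit_basic(4)[OF g] by blast
  have "g' (g w) = w" using g'(2) e_fixed_iff[of w] w by (metis comp_apply)
  then show ?thesis
    using length_mono[OF unit_basic(1)[OF g], of w] length_mono[OF unit_basic(1)[OF g'(1)], of "g w"]
    by simp
qed

lemma unit_letter:
  assumes "g \<in> units_at S e" and "s \<in> fixed_letters"
  shows "\<exists>s'\<in>fixed_letters. g [s] = [s']"
proof -
  have "length (g [s]) = 1" using unit_length[OF assms(1), of "[s]"] assms(2) by simp
  then obtain s' where "g [s] = [s']" by (auto simp: length_Suc_conv)
  then show ?thesis using unit_into_lists[OF assms(1), of "[s]"] by auto
qed

lemma section_absorbs_e:
  assumes f: "f \<in> S" "f \<circ> e = f" "e \<circ> f = f" and s: "s \<in> fixed_letters"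
  shows "secw f [s] \<circ> e = secw f [s]" and "e \<circ> secw f [s] = secw f [s]"
proof -
  have es: "e [s] = [s]" using s by (simp add: fixed_letters_def)
  have decomp: "f (s # v) = f [s] @ secw f [s] v" for v using section_decomp[OF f(1), of "[s]" v] by simp
  show "secw f [s] \<circ> e = secw f [s]"
  proof
    fix v
    have "f (s # e v) = f (e (s # v))" using e_append_fixed[OF es, of v] by simp
    also have "\<dots> = f (s # v)" using f(2) by (metis comp_apply)
    finally show "(secw f [s] \<circ> e) v = secw f [s] v" using decomp[of v] decomp[of "e v"] by simp
  qed
  show "e \<circ> secw f [s] = secw f [s]"
  proof
    fix v
    have efs: "e (f [s]) = f [s]" and "e (f (s # v)) = f (s # v)" using f(3) by (metis comp_apply)+
    then have "f [s] @ e (secw f [s] v) = f [s] @ secw f [s] v"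
      using decomp[of v] e_append_fixed[OF efs] by simp
    then show "(e \<circ> secw f [s]) v = secw f [s] v" by simp
  qed
qed

lemma section_inverse:
  assumes "g \<in> S" "g' \<in> S" "g' \<circ> g = e" and "s \<in> fixed_letters"
    and "g [s] = [s']" and "g' [s'] = [s]"
  shows "secw g' [s'] \<circ> secw g [s] = e"
proof
  fix v
  have dec: "f (a # u) = f [a] @ secw f [a] u" if "f \<in> S" for f a u
    using section_decomp[OF that, of "[a]" u] by simp
  have "s # e v = e (s # v)"
    using e_append_fixed[of "[s]" v] assms(4) by (simp add: fixed_letters_def)
  also have "\<dots> = g' (g (s # v))" using assms(3) by (metis comp_apply)
  also have "\<dots> = s # secw g' [s'] (secw g [s] v)"
    using dec[OF assms(1), of s v] dec[OF assms(2), of s'] assms(5,6) by simp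
  finally show "(secw g' [s'] \<circ> secw g [s]) v = e v" by simp
qed

lemma unit_section:
  assumes g: "g \<in> units_at S e" and s: "s \<in> fixed_letters"
  shows "secw g [s] \<in> units_at S e"
proof -
  obtain g' where g': "g' \<in> units_at S e" "g' \<circ> g = e" "g \<circ> g' = e" using unit_basic(4)[OF g] by blast
  obtain s' where s': "s' \<in> fixed_letters" "g [s] = [s']" using unit_letter[OF g s] by blast
  have "g' [s'] = e [s]" using g'(2) s'(2) by (metis comp_apply)
  then have g's': "g' [s'] = [s]" using s by (simp add: fixed_letters_def)
  note gS = unit_basic(1)[OF g] and g'S = unit_basic(1)[OF g'(1)]
  have "secw g' [s'] \<circ> secw g [s] = e" "secw g [s] \<circ> secw g' [s'] = e"
    using section_inverse[OF gS g'S g'(2) s s'(2) g's'] section_inverse[OF g'S gS g'(3) s'(1) g's' s'(2)]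
    by simp_all
  moreover note section_absorbs_e[OF gS unit_basic(2,3)[OF g] s]
    section_absorbs_e[OF g'S unit_basic(2,3)[OF g'(1)] s'(1)]
  moreover have "secw g [s] \<in> S" "secw g' [s'] \<in> S" using section_closed gS g'S by blast+
  ultimately show ?thesis unfolding units_at_def by blast
qed

lemma units_self_similar: "self_similar_word_group (units_at S e) e fixed_letters"
proof (rule self_similar_word_group.intro)
  show "group (comp_monoid (units_at S e) e)" by (rule units_at_group[OF comp_closed e_in e_idem])
  fix g w s v assume g: "g \<in> units_at S e"
  show "g w \<in> lists fixed_letters" by (rule unit_into_lists[OF g])
  show "g [] = []" by (rule empty_word[OF unit_basic(1)[OF g]])
  assume s: "s \<in> fixed_letters"
  show "\<exists>s'\<in>fixed_letters. g [s] = [s']" by (rule unit_letter[OF g s])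
  show "g (s # v) = g [s] @ secw g [s] v" using section_decomp[OF unit_basic(1)[OF g], of "[s]" v] by simp
  show "secw g [s] \<in> units_at S e" by (rule unit_section[OF g s])
next
  fix w assume "w \<in> lists fixed_letters" then show "e w = w" using e_fixed_iff by blast
qed

lemma countable_units: "countable S \<Longrightarrow> countable (units_at S e)"
  by (rule countable_subset[of _ S]) (auto simp: units_at_def)

end

(* A semigroup generated by countably many maps is countable: it consists of finite composites. *)
lemma countable_sgen:
  assumes "countable A" shows "countable (sgen A)"
proof -
  have compose_append: "foldr (\<circ>) (fs @ gs) id = foldr (\<circ>) fs id \<circ> foldr (\<circ>) gs id"
    for fs gs :: "('b \<Rightarrow> 'b) list"
    by (induction fs) (simp_all add: comp_assoc)
  have "sgen A \<subseteq> (\<lambda>fs. foldr (\<circ>) fs id) ` lists A"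
  proof
    fix f assume "f \<in> sgen A" then show "f \<in> (\<lambda>fs. foldr (\<circ>) fs id) ` lists A"
    proof (induction rule: sgen.induct)
      case (base f)
      then have "f = foldr (\<circ>) [f] id" "[f] \<in> lists A" by simp_all
      then show ?case by (rule image_eqI)
    next
      case (comp f g)
      then obtain fs gs where "fs \<in> lists A" "gs \<in> lists A" "f = foldr (\<circ>) fs id" "g = foldr (\<circ>) gs id"
        by blast
      then have "f \<circ> g = foldr (\<circ>) (fs @ gs) id" "fs @ gs \<in> lists A"
        by (simp_all only: compose_append append_in_lists_conv simp_thms)
      then show ?case by (rule image_eqI)
    qed
  qed
  then show ?thesis by (rule countable_subset) (intro countable_image countable_lists assms)
qed

theorem mainTheorem12:
  fixes t :: "'q::finite \<Rightarrow> 'a::finite \<Rightarrow> 'q" and out :: "'q \<Rightarrow> 'a \<Rightarrow> 'a list"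
    and G :: "('a list \<Rightarrow> 'a list) set"
  assumes "expanding_automaton t out"
    and "sg_maximal_subgroup (exp_semigroup t out) G"
    and "\<forall>K. sg_maximal_subgroup (exp_semigroup t out) K \<longrightarrow> K = G"
  shows "\<exists>(X::nat set) (t'::nat \<Rightarrow> nat \<Rightarrow> nat) (out'::nat \<Rightarrow> nat \<Rightarrow> nat).
           invertible_sync_automaton X t' out' \<and> group_of G \<cong> self_similar_group X t' out'"
proof -
  let ?S = "exp_semigroup t out"
  have S: "word_semigroup ?S" by (rule exp_semigroup_word_semigroup[OF assms(1)])
  interpret word_semigroup ?S by (fact S)
  obtain e where e: "e \<in> ?S" "e \<circ> e = e" "G = units_at ?S e"
    and unique: "\<And>f. f \<in> ?S \<Longrightarrow> f \<circ> f = f \<Longrightarrow> f = e"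
    using unique_maximal_subgroup[OF comp_closed assms(2,3)] by blast
  interpret unipotent_word_semigroup ?S e
    by (intro unipotent_word_semigroup.intro unipotent_word_semigroup_axioms.intro S e(1,2) unique)
  interpret self_similar_word_group G e fixed_letters
    using units_self_similar by (simp only: e(3))
  have "finite fixed_letters" by (rule finite_subset[OF subset_UNIV finite_UNIV])
  moreover have "countable ?S"
    unfolding exp_semigroup_def by (intro countable_sgen countable_image countable_finite finite_UNIV)
  then have "countable G" using countable_units e(3) by simp
  ultimately show ?thesis by (rule realisation_as_self_similar_group)
qed

end
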